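(* Let $\mathcal{C}=\{C_1,\dots,C_m\}$ be a family of chargers and $\mathcal{R}=\{R_1,\dots,R_n\}$ a nonempty family ($n\ge 1$) of receivers, placed in the plane so that the placement constraints hold. If $\mathbf{x}^*\in[0,1]^m$ is an optimal solution to MAX-POWER, i.e. $\mathbf{x}^*\in\arg\max_{\mathbf{x}\in[0,1]^m} P(\mathcal{C}(\mathbf{x}),\mathcal{R})$, then $\mathbf{x}^*\in\{0,1\}^m$. In particular, there exists an optimal solution to MAX-POWER in which every charger operates either at full capacity ($\mathbf{x}_j=1$) or not at all ($\mathbf{x}_j=0$).
   Context: Fixed constants $\lambda>0$ (wavelength), $\beta>0$, $\gamma>0$. For a charger $C$ and receiver $R$ at Euclidean distance $d=\mathrm{dist}(C,R)$, the electric field vector is $\mathbf{E}(C,R)=\beta\cdot\frac{1}{d}\cdot\big(\cos(\tfrac{2\pi}{\lambda}d),\ \sin(\tfrac{2\pi}{\lambda}d)\big)^T\in\mathbb{R}^2$. A configuration is a vector $\mathbf{x}\in[0,1]^m$, $\mathbf{x}_j$ being the operation level of charger $C_j$. The power received by $R$ under configuration $\mathbf{x}$ is $P(\mathcal{C}(\mathbf{x}),R)=\gamma\,\big\|\sum_{j=1}^m \mathbf{x}_j\,\mathbf{E}(C_j,R)\big\|^2$ (Euclidean norm), and for a set $A$ of receivers $P(\mathcal{C}(\mathbf{x}),A)=\sum_{R\in A}P(\mathcal{C}(\mathbf{x}),R)$. Placement constraints: $\mathrm{dist}(C,R)\ge\lambda$ for every charger $C$ and receiver $R$, and $\mathrm{dist}(R,R')\ge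 \frac{\lambda}{2\pi}$ for every pair of distinct receivers $R,R'$. MAX-POWER: find $\mathbf{x}^*\in\arg\max_{\mathbf{x}\in[0,1]^m}P(\mathcal{C}(\mathbf{x}),\mathcal{R})$. *)

theory Defs
  imports "HOL-Analysis.Analysis"
begin

text \<open>Points of the plane are elements of real^2. Chargers C_1..C_m and receivers
  R_1..R_n are indexed families (indices 0..<m and 0..<n).\<close>

definition efield :: "real \<Rightarrow> real \<Rightarrow> real^2 \<Rightarrow> real^2 \<Rightarrow> real^2" where
  "efield lam beta C R =
     (let d = dist C R in
      (beta * (1 / d)) *\<^sub>R vector [cos (2 * pi / lam * d), sin (2 * pi / lam * d)])"

definition power_at :: "real \<Rightarrow> real \<Rightarrow> real \<Rightarrow> nat \<Rightarrow> (nat \<Rightarrow> real^2) \<Rightarrow> (nat \<Rightarrow> real) \<Rightarrow> real^2 \<Rightarrow> real" where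
  "power_at lam beta gamma m C x R =
     gamma * (norm (\<Sum>j<m. x j *\<^sub>R efield lam beta (C j) R))\<^sup>2"

definition total_power :: "real \<Rightarrow> real \<Rightarrow> real \<Rightarrow> nat \<Rightarrow> (nat \<Rightarrow> real^2) \<Rightarrow> nat \<Rightarrow> (nat \<Rightarrow> real^2) \<Rightarrow> (nat \<Rightarrow> real) \<Rightarrow> real" where
  "total_power lam beta gamma m C n R x = (\<Sum>i<n. power_at lam beta gamma m C x (R i))"

definition is_config :: "nat \<Rightarrow> (nat \<Rightarrow> real) \<Rightarrow> bool" where
  "is_config m x \<longleftrightarrow> (\<forall>j<m. x j \<in> {0..1})"

definition is_binary :: "nat \<Rightarrow> (nat \<Rightarrow> real) \<Rightarrow> bool" where
  "is_binary m x \<longleftrightarrow> (\<forall>j<m. x j = 0 \<or> x j = 1)"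

definition max_power_opt :: "real \<Rightarrow> real \<Rightarrow> real \<Rightarrow> nat \<Rightarrow> (nat \<Rightarrow> real^2) \<Rightarrow> nat \<Rightarrow> (nat \<Rightarrow> real^2) \<Rightarrow> (nat \<Rightarrow> real) \<Rightarrow> bool" where
  "max_power_opt lam beta gamma m C n R x \<longleftrightarrow>
     is_config m x \<and>
     (\<forall>y. is_config m y \<longrightarrow> total_power lam beta gamma m C n R y \<le> total_power lam beta gamma m C n R x)"

end

theory Submission
  imports Defs
begin

text \<open>The total power is a quadratic function of each single operation level x_j, with
  leading coefficient gamma * (sum over i of |E(C_j,R_i)|^2) >= 0. Along every coordinate it is
  therefore convex, and strictly convex as soon as the field of C_j is nonzero at some receiver,
  which the constraint dist(C_j,R_i) >= lambda > 0 guarantees. A strictly convex function on [0,1] attains its maximum only at an endpoint, so an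
  optimal configuration has no fractional coordinate. Conversely, rounding the coordinates one at
  a time to the better endpoint never decreases the power, so the maximum over [0,1]^m is attained
  among the finitely many binary configurations.\<close>

lemma norm_power2_interpolation_gap:
  fixes u v :: "'a::real_inner"
  shows "(1 - s) * (norm u)\<^sup>2 + s * (norm (u + v))\<^sup>2 - (norm (u + s *\<^sub>R v))\<^sup>2 = s * (1 - s) * (norm v)\<^sup>2"
  unfolding power2_norm_eq_inner
  by (simp add: inner_add_left inner_add_right inner_commute algebra_simps)

lemma sum_scaleR_fun_upd:
  fixes e :: "nat \<Rightarrow> 'a::real_vector"
  assumes "j < m"
  shows "(\<Sum>k<m. (x(j := t)) k *\<^sub>R e k) = (\<Sum>k<m. (x(j := 0)) k *\<^sub>R e k) + t *\<^sub>R e j"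
proof -
  have "(\<Sum>k<m. (x(j := t)) k *\<^sub>R e k) = t *\<^sub>R e j + (\<Sum>k\<in>{..<m} - {j}. x k *\<^sub>R e k)"
    using assms by (simp add: sum.remove[of _ j])
  moreover have "(\<Sum>k<m. (x(j := 0)) k *\<^sub>R e k) = (\<Sum>k\<in>{..<m} - {j}. x k *\<^sub>R e k)"
    using assms by (simp add: sum.remove[of _ j])
  ultimately show ?thesis by simp
qed

lemma power_at_interpolation_gap:
  assumes "j < m"
  shows "(1 - s) * power_at lam beta gamma m C (x(j := 0)) R
           + s * power_at lam beta gamma m C (x(j := 1)) R
           - power_at lam beta gamma m C (x(j := s)) R
         = s * (1 - s) * gamma * (norm (efield lam beta (C j) R))\<^sup>2"
proof -
  define u where "u = (\<Sum>k<m. (x(j := 0)) k *\<^sub>R efield lam beta (C k) R)"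
  define v where "v = efield lam beta (C j) R"
  have "power_at lam beta gamma m C (x(j := t)) R = gamma * (norm (u + t *\<^sub>R v))\<^sup>2" for t
  proof -
    have "(\<Sum>k<m. (x(j := t)) k *\<^sub>R efield lam beta (C k) R) = u + t *\<^sub>R v"
      unfolding u_def v_def by (rule sum_scaleR_fun_upd[OF assms])
    then show ?thesis by (simp add: power_at_def)
  qed
  then have "(1 - s) * power_at lam beta gamma m C (x(j := 0)) R
               + s * power_at lam beta gamma m C (x(j := 1)) R
               - power_at lam beta gamma m C (x(j := s)) R
             = gamma * ((1 - s) * (norm u)\<^sup>2 + s * (norm (u + v))\<^sup>2 - (norm (u + s *\<^sub>R v))\<^sup>2)"
    by (simp add: algebra_simps)
  then show ?thesis
    by (simp add: norm_power2_interpolation_gap v_def)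
qed

lemma total_power_interpolation_gap:
  assumes "j < m"
  shows "(1 - s) * total_power lam beta gamma m C n R (x(j := 0))
           + s * total_power lam beta gamma m C n R (x(j := 1))
           - total_power lam beta gamma m C n R (x(j := s))
         = s * (1 - s) * gamma * (\<Sum>i<n. (norm (efield lam beta (C j) (R i)))\<^sup>2)"
proof -
  have "(1 - s) * total_power lam beta gamma m C n R (x(j := 0))
          + s * total_power lam beta gamma m C n R (x(j := 1))
          - total_power lam beta gamma m C n R (x(j := s))
        = (\<Sum>i<n. (1 - s) * power_at lam beta gamma m C (x(j := 0)) (R i)
                   + s * power_at lam beta gamma m C (x(j := 1)) (R i)
                   - power_at lam beta gamma m C (x(j := s)) (R i))"
    by (simp add: total_power_def sum_distrib_left sum_subtractf sum.distrib)
  then show ?thesis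
    by (simp add: power_at_interpolation_gap[OF assms] sum_distrib_left)
qed

lemma total_power_fun_upd_le_max:
  assumes "j < m" "gamma \<ge> 0" "0 \<le> s" "s \<le> 1"
  shows "total_power lam beta gamma m C n R (x(j := s))
         \<le> max (total_power lam beta gamma m C n R (x(j := 0)))
               (total_power lam beta gamma m C n R (x(j := 1)))"
proof -
  let ?f = "total_power lam beta gamma m C n R"
  have "s * (1 - s) * gamma * (\<Sum>i<n. (norm (efield lam beta (C j) (R i)))\<^sup>2) \<ge> 0"
    using assms by (intro mult_nonneg_nonneg sum_nonneg) auto
  then have "?f (x(j := s)) \<le> (1 - s) * ?f (x(j := 0)) + s * ?f (x(j := 1))"
    using total_power_interpolation_gap[OF assms(1), of s lam beta gamma C n R x] by linarith
  also have "\<dots> \<le> (1 - s) * max (?f (x(j := 0))) (?f (x(j := 1))) + s * max (?f (x(j := 0))) (?f (x(j := 1)))"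
    using assms by (intro add_mono mult_left_mono) auto
  finally show ?thesis by (simp add: algebra_simps)
qed

lemma total_power_fun_upd_less_max:
  assumes "j < m" "gamma > 0" "0 < s" "s < 1"
    and "i < n" "efield lam beta (C j) (R i) \<noteq> 0"
  shows "total_power lam beta gamma m C n R (x(j := s))
         < max (total_power lam beta gamma m C n R (x(j := 0)))
               (total_power lam beta gamma m C n R (x(j := 1)))"
proof -
  let ?f = "total_power lam beta gamma m C n R"
  have "0 < (norm (efield lam beta (C j) (R i)))\<^sup>2"
    using assms(6) by simp
  also have "\<dots> \<le> (\<Sum>i<n. (norm (efield lam beta (C j) (R i)))\<^sup>2)"
    using assms(5) by (intro member_le_sum) auto
  finally have "s * (1 - s) * gamma * (\<Sum>i<n. (norm (efield lam beta (C j) (R i)))\<^sup>2) > 0"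
    using assms(2-4) by simp
  then have "?f (x(j := s)) < (1 - s) * ?f (x(j := 0)) + s * ?f (x(j := 1))"
    using total_power_interpolation_gap[OF assms(1), of s lam beta gamma C n R x] by linarith
  also have "\<dots> \<le> (1 - s) * max (?f (x(j := 0))) (?f (x(j := 1))) + s * max (?f (x(j := 0))) (?f (x(j := 1)))"
    using assms by (intro add_mono mult_left_mono) auto
  finally show ?thesis by (simp add: algebra_simps)
qed

lemma norm_efield: "norm (efield lam beta C R) = \<bar>beta\<bar> / dist C R"
proof -
  have "norm (vector [cos a, sin a] :: real^2) = 1" for a
    by (simp add: norm_eq_sqrt_inner inner_vec_def sum_2 power2_eq_square[symmetric])
  then show ?thesis
    by (simp add: efield_def Let_def)
qed

lemma efield_nonzero:
  assumes "beta \<noteq> 0" "dist C R > 0"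
  shows "efield lam beta C R \<noteq> 0"
  using assms norm_efield[of lam beta C R] by fastforce

lemma is_binary_imp_is_config: "is_binary m x \<Longrightarrow> is_config m x"
  unfolding is_binary_def is_config_def by force

lemma total_power_cong:
  assumes "\<And>j. j < m \<Longrightarrow> x j = y j"
  shows "total_power lam beta gamma m C n R x = total_power lam beta gamma m C n R y"
  unfolding total_power_def power_at_def using assms by (auto intro!: sum.cong)

lemma max_power_opt_is_binary:
  assumes "gamma > 0"
    and field: "\<And>j. j < m \<Longrightarrow> \<exists>i<n. efield lam beta (C j) (R i) \<noteq> 0"
    and opt: "max_power_opt lam beta gamma m C n R x"
  shows "is_binary m x"
  unfolding is_binary_def
proof (intro allI impI, rule ccontr)
  let ?f = "total_power lam beta gamma m C n R"
  fix j assume j: "j < m" and fractional: "\<not> (x j = 0 \<or> x j = 1)"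
  have config: "is_config m x"
    using opt by (simp add: max_power_opt_def)
  then have "0 < x j" "x j < 1"
    using j fractional by (auto simp: is_config_def)
  moreover obtain i where "i < n" "efield lam beta (C j) (R i) \<noteq> 0"
    using field[OF j] by blast
  ultimately have "?f (x(j := x j)) < max (?f (x(j := 0))) (?f (x(j := 1)))"
    using total_power_fun_upd_less_max[OF j assms(1)] by blast
  moreover have "is_config m (x(j := 0))" "is_config m (x(j := 1))"
    using config by (auto simp: is_config_def)
  then have "max (?f (x(j := 0))) (?f (x(j := 1))) \<le> ?f x"
    using opt by (simp add: max_power_opt_def)
  ultimately show False by simp
qed

lemma exists_binary_config_ge:
  assumes "gamma \<ge> 0" "is_config m y"
  shows "\<exists>b. is_binary m b
             \<and> total_power lam beta gamma m C n R y \<le> total_power lam beta gamma m C n R b"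
proof -
  let ?f = "total_power lam beta gamma m C n R"
  have "\<exists>b. is_config m b \<and> (\<forall>j<min k m. b j = 0 \<or> b j = 1) \<and> ?f y \<le> ?f b" for k
  proof (induction k)
    case 0
    then show ?case using assms(2) by auto
  next
    case (Suc k)
    then obtain b where b: "is_config m b" "\<forall>j<min k m. b j = 0 \<or> b j = 1" "?f y \<le> ?f b"
      by blast
    show ?case
    proof (cases "k < m")
      case False
      then show ?thesis using b by (intro exI[of _ b]) simp
    next
      case True
      have "0 \<le> b k" "b k \<le> 1"
        using b(1) True by (auto simp: is_config_def)
      then have "?f (b(k := b k)) \<le> max (?f (b(k := 0))) (?f (b(k := 1)))"
        by (rule total_power_fun_upd_le_max[OF True assms(1)])
      define t :: real where "t = (if ?f (b(k := 0)) \<le> ?f (b(k := 1)) then 1 else 0)"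
      have t: "t = 0 \<or> t = 1" "?f b \<le> ?f (b(k := t))"
        using \<open>?f (b(k := b k)) \<le> _\<close> by (auto simp: t_def max_def)
      have "is_config m (b(k := t))"
        using b(1) t(1) by (auto simp: is_config_def)
      moreover have "\<forall>j<min (Suc k) m. (b(k := t)) j = 0 \<or> (b(k := t)) j = 1"
        using b(2) t(1) True by (auto simp: less_Suc_eq)
      moreover have "?f y \<le> ?f (b(k := t))"
        using b(3) t(2) by linarith
      ultimately show ?thesis by blast
    qed
  qed
  from this[of m] show ?thesis
    by (simp add: is_binary_def) blast
qed

lemma exists_binary_max_power_opt:
  assumes "gamma \<ge> 0"
  shows "\<exists>x. max_power_opt lam beta gamma m C n R x \<and> is_binary m x"
proof -
  let ?f = "total_power lam beta gamma m C n R"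
  define S where "S = PiE {..<m} (\<lambda>_. {0::real, 1})"
  have "finite S"
    unfolding S_def by (simp add: finite_PiE)
  have "(\<lambda>j\<in>{..<m}. 0) \<in> S"
    unfolding S_def by (simp add: PiE_iff)
  then have "Max (?f ` S) \<in> ?f ` S"
    using \<open>finite S\<close> by (intro Max_in) auto
  then obtain b where "b \<in> S" and b_max: "?f b = Max (?f ` S)"
    by (metis imageE)
  then have binary: "is_binary m b"
    by (simp add: S_def PiE_iff is_binary_def)
  have b_opt: "?f y \<le> ?f b" if y: "is_config m y" for y
  proof -
    obtain c where c: "is_binary m c" "?f y \<le> ?f c"
      using exists_binary_config_ge[OF assms y] by blast
    have "restrict c {..<m} \<in> S"
      using c(1) by (simp add: S_def PiE_iff is_binary_def)
    then have "?f (restrict c {..<m}) \<le> ?f b"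
      unfolding b_max using \<open>finite S\<close> by (intro Max_ge finite_imageI imageI)
    moreover have "?f c = ?f (restrict c {..<m})"
      by (rule total_power_cong) simp
    ultimately show ?thesis
      using c(2) by linarith
  qed
  then show ?thesis
    unfolding max_power_opt_def using binary is_binary_imp_is_config[OF binary] by blast
qed

theorem lemma1:
  fixes lam beta gamma :: real and m n :: nat
    and C :: "nat \<Rightarrow> real^2" and R :: "nat \<Rightarrow> real^2"
  assumes "lam > 0" and "beta > 0" and "gamma > 0"
    and "n \<ge> 1"
    and "\<And>j i. j < m \<Longrightarrow> i < n \<Longrightarrow> dist (C j) (R i) \<ge> lam"
    and "\<And>i i'. i < n \<Longrightarrow> i' < n \<Longrightarrow> i \<noteq> i' \<Longrightarrow> dist (R i) (R i') \<ge> lam / (2 * pi)"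
  shows "(\<forall>x. max_power_opt lam beta gamma m C n R x \<longrightarrow> is_binary m x) \<and>
         (\<exists>x. max_power_opt lam beta gamma m C n R x \<and> is_binary m x)"
proof
  have "\<exists>i<n. efield lam beta (C j) (R i) \<noteq> 0" if "j < m" for j
  proof -
    have "dist (C j) (R 0) > 0"
      using assms(1,4) assms(5)[OF that, of 0] by linarith
    then show ?thesis
      using assms(2,4) efield_nonzero by (intro exI[of _ 0]) auto
  qed
  then show "\<forall>x. max_power_opt lam beta gamma m C n R x \<longrightarrow> is_binary m x"
    using max_power_opt_is_binary[OF assms(3)] by blast
  show "\<exists>x. max_power_opt lam beta gamma m C n R x \<and> is_binary m x"
    using assms(3) by (intro exists_binary_max_power_opt) simp
qed

end
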